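(* Fix $\mu_0\neq\mu_1$ such that private beliefs are unbounded from below, i.e.\ for every $\epsilon>0$, $\mathbb{P}(B_u<\epsilon)>0$. Then there is a sequence $q(n)=q(n,\mu_0,\mu_1)$, depending only on $\mu_0,\mu_1$, with $q(n)\to1$ as $n\to\infty$, such that the following holds: for every finite set $V$ of $n$ agents with private signals and information $\sigma$-algebras as in the context, having common knowledge of actions (for all $u,w\in V$, $L_u$ is a.s.\ $\mathcal{F}_w$-measurable) and a common optimal action set $L$ with $L=L_u$ almost surely for all $u\in V$, we have $$\mathbb{P}(L=\{0\}\mid S=0)\ge q(n).$$
   Context: The state $S$ is uniform on $\{0,1\}$. $\mu_0\neq\mu_1$ are probability measures on a measurable space $(\Omega,\mathcal{O})$ (the Radon–Nikodym derivative $d\mu_1/d\mu_0$ is assumed to exist). $V$ is a finite set of agents; agent $u$ has a private signal $W_u$, and conditionally on $S$ the signals are i.i.d.\ with law $\mu_S$. The private belief is $B_u=\mathbb{P}(S=1\mid W_u)$. Each agent has information $\sigma$-algebra $\mathcal{F}_u$ with $\sigma(W_u)\subseteq\mathcal{F}_u\subseteq\sigma(W_v:v\in V)$; posterior belief $X_u=\mathbb{P}(S=1\mid\mathcal{F}_u)$; posterior optimal action set $L_u=\{0\}$ if $X_u<1/2$, $\{1\}$ if $X_u>1/2$, $\{0,1\}$ if $X_u=1/2$. *)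

theory Defs
  imports "HOL-Probability.Probability"
begin

text \<open>The outcome space is bool \<times> (nat \<Rightarrow> 'a): the first component is the
  state S (True = state 1), the second the vector of private signals (W_u) indexed by the
  agents u \<in> V \<subseteq> nat.\<close>

definition joint :: "'a measure \<Rightarrow> 'a measure \<Rightarrow> nat set \<Rightarrow> (bool \<times> (nat \<Rightarrow> 'a)) measure" where
  "joint \<mu>0 \<mu>1 V =
     bind (measure_pmf (pmf_of_set (UNIV :: bool set)))
       (\<lambda>s. distr (\<Pi>\<^sub>M v\<in>V. (if s then \<mu>1 else \<mu>0))
                  (count_space UNIV \<Otimes>\<^sub>M (\<Pi>\<^sub>M v\<in>V. \<mu>0)) (\<lambda>w. (s, w)))"

definition state :: "bool \<times> (nat \<Rightarrow> 'a) \<Rightarrow> bool" where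
  "state \<omega> = fst \<omega>"

definition signal :: "nat \<Rightarrow> bool \<times> (nat \<Rightarrow> 'a) \<Rightarrow> 'a" where
  "signal u \<omega> = snd \<omega> u"

definition sig_signal :: "'a measure \<Rightarrow> 'a measure \<Rightarrow> nat set \<Rightarrow> nat \<Rightarrow> (bool \<times> (nat \<Rightarrow> 'a)) measure" where
  "sig_signal \<mu>0 \<mu>1 V u = vimage_algebra (space (joint \<mu>0 \<mu>1 V)) (signal u) \<mu>0"

definition sig_all_signals :: "'a measure \<Rightarrow> 'a measure \<Rightarrow> nat set \<Rightarrow> (bool \<times> (nat \<Rightarrow> 'a)) measure" where
  "sig_all_signals \<mu>0 \<mu>1 V =
     sigma (space (joint \<mu>0 \<mu>1 V)) (\<Union>v\<in>V. sets (sig_signal \<mu>0 \<mu>1 V v))"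

definition post_belief ::
  "'a measure \<Rightarrow> 'a measure \<Rightarrow> nat set \<Rightarrow> (bool \<times> (nat \<Rightarrow> 'a)) measure \<Rightarrow> bool \<times> (nat \<Rightarrow> 'a) \<Rightarrow> real" where
  "post_belief \<mu>0 \<mu>1 V F =
     real_cond_exp (joint \<mu>0 \<mu>1 V) F (indicator {\<omega>. state \<omega>})"

text \<open>Private belief B = P(S = 1 | W) of an agent (computed in the one-agent model, agent 0;
  its law does not depend on the agent).\<close>
definition priv_belief :: "'a measure \<Rightarrow> 'a measure \<Rightarrow> bool \<times> (nat \<Rightarrow> 'a) \<Rightarrow> real" where
  "priv_belief \<mu>0 \<mu>1 = post_belief \<mu>0 \<mu>1 {0} (sig_signal \<mu>0 \<mu>1 {0} 0)"

definition opt_actions :: "real \<Rightarrow> nat set" where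
  "opt_actions x = (if x < 1/2 then {0} else if x > 1/2 then {1} else {0, 1})"

definition info_algebra ::
  "'a measure \<Rightarrow> 'a measure \<Rightarrow> nat set \<Rightarrow> nat \<Rightarrow> (bool \<times> (nat \<Rightarrow> 'a)) measure \<Rightarrow> bool" where
  "info_algebra \<mu>0 \<mu>1 V u F \<longleftrightarrow>
     space F = space (joint \<mu>0 \<mu>1 V) \<and>
     sets (sig_signal \<mu>0 \<mu>1 V u) \<subseteq> sets F \<and>
     sets F \<subseteq> sets (sig_all_signals \<mu>0 \<mu>1 V)"

end

theory Submission
  imports Defs
begin

text \<open>
  Given S = 0 the n signals are i.i.d. with law \<mu>0.  Fix an event E and t \<in> [0,1].
  (1) For every agent u, P(L \<noteq> {0}, W_u \<in> E | S = 0) \<le> \<mu>1(E): a.s. L \<noteq> {0} exactly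
      where u's posterior X_u is at least 1/2, on the F_u-measurable event {X_u \<ge> 1/2, W_u \<in> E}
      state 1 is at least as likely as state 0, and P(S = 1, W_u \<in> E) = \<mu>1(E) / 2.
  (2) For every event D of the product space, integrating the Bernoulli-type pointwise bound
      1_D \<le> t \<Sum>_u 1_{D \<inter> {W_u \<in> E}} + \<Prod>_u (1 - t 1_E(W_u)) gives
      P_0(D) \<le> t \<Sum>_u P_0(D, W_u \<in> E) + (1 - t \<mu>0(E))^n.
  With D = {L \<noteq> {0}} this yields P(L = {0} | S = 0) \<ge> 1 - (t n \<mu>1(E) + (1 - t \<mu>0(E))^n),
  and q(n) is 1 minus the infimum of the bracket over t and E.  Unbounded private beliefs
  provide, for every \<delta> > 0, an event E with \<mu>1(E) \<le> \<delta> \<mu>0(E) and \<mu>0(E) > 0; choosing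
  t = x / (n \<mu>0(E)) bounds the infimum by x \<delta> + e^{-x}, so q(n) \<rightarrow> 1.
\<close>

section \<open>A covering estimate on product spaces\<close>

lemma one_le_linear_plus_power:
  fixes t :: real assumes "0 \<le> t" "t \<le> 1"
  shows "1 \<le> t * real k + (1 - t) ^ k"
  using Bernoulli_inequality[of "-t" k] assms by (simp add: mult.commute)

text \<open>Pointwise form of the covering estimate: for x \<in> D with k coordinates in E the right-hand
  side is t k + (1 - t)^k \<ge> 1; outside D both terms are nonnegative.\<close>
lemma covering_pointwise:
  fixes t :: real
  assumes V: "finite V" and x: "x \<in> A" and t: "0 \<le> t" "t \<le> 1"
  shows "indicator D x \<le> t * (\<Sum>u\<in>V. indicator (D \<inter> {y\<in>A. y u \<in> E}) x)
                          + (\<Prod>u\<in>V. 1 - t * indicator E (x u))"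
proof (cases "x \<in> D")
  case False
  have "0 \<le> (\<Prod>u\<in>V. 1 - t * indicator E (x u))" using t by (intro prod_nonneg) (auto simp: indicator_def)
  moreover have "0 \<le> t * (\<Sum>u\<in>V. indicator (D \<inter> {y\<in>A. y u \<in> E}) x)"
    using t by (intro mult_nonneg_nonneg sum_nonneg) auto
  ultimately show ?thesis using False by simp
next
  case True
  let ?K = "{u\<in>V. x u \<in> E}"
  have "(\<Sum>u\<in>V. indicator (D \<inter> {y\<in>A. y u \<in> E}) x) = (\<Sum>u\<in>V. if x u \<in> E then 1 else (0::real))"
    using True x by (intro sum.cong) (auto simp: indicator_def)
  also have "\<dots> = real (card ?K)" using V by (simp add: sum.If_cases Int_def)
  finally have sum_eq: "(\<Sum>u\<in>V. indicator (D \<inter> {y\<in>A. y u \<in> E}) x) = real (card ?K)" .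
  have "(\<Prod>u\<in>V. 1 - t * indicator E (x u)) = (\<Prod>u\<in>V. if x u \<in> E then 1 - t else 1)"
    by (intro prod.cong) (auto simp: indicator_def)
  also have "\<dots> = (1 - t) ^ card ?K" using V by (simp add: prod.If_cases Int_def)
  finally have prod_eq: "(\<Prod>u\<in>V. 1 - t * indicator E (x u)) = (1 - t) ^ card ?K" .
  show ?thesis using True one_le_linear_plus_power[OF t, of "card ?K"] by (simp add: sum_eq prod_eq)
qed

text \<open>If D meets each cylinder {x_u \<in> E} in measure at most a, then D has measure at most
  t |V| a + (1 - t \<mu>(E))^|V|: integrate the pointwise estimate; by independence the product
  term integrates to (1 - t \<mu>(E))^|V|.\<close>
lemma product_covering_bound:
  fixes \<mu> :: "'a measure" and V :: "'i set"
  assumes mu: "prob_space \<mu>" and V: "finite V"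
    and D: "D \<in> sets (PiM V (\<lambda>_. \<mu>))" and E: "E \<in> sets \<mu>" and t: "0 \<le> t" "t \<le> 1"
    and a: "\<And>u. u \<in> V \<Longrightarrow> measure (PiM V (\<lambda>_. \<mu>)) (D \<inter> {x\<in>space (PiM V (\<lambda>_. \<mu>)). x u \<in> E}) \<le> a"
  shows "measure (PiM V (\<lambda>_. \<mu>)) D \<le> t * real (card V) * a + (1 - t * measure \<mu> E) ^ card V"
proof -
  let ?P = "PiM V (\<lambda>_. \<mu>)"
  interpret M: prob_space \<mu> by (rule mu)
  interpret PP: product_prob_space "\<lambda>_. \<mu>" V
    by (simp add: product_prob_space_def product_prob_space_axioms_def product_sigma_finite_def
        mu M.sigma_finite_measure_axioms)
  let ?C = "\<lambda>u. D \<inter> {x\<in>space ?P. x u \<in> E}"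
  let ?f = "\<lambda>(u::'i) (y::'a). 1 - t * indicator E y :: real"
  have C: "?C u \<in> sets ?P" if "u \<in> V" for u
    using D E that by measurable
  have fint: "integrable \<mu> (?f u)" for u
    using E by (intro Bochner_Integration.integrable_diff) (auto simp: M.emeasure_finite less_top[symmetric])
  have fI: "integral\<^sup>L \<mu> (?f u) = 1 - t * measure \<mu> E" for u
    using E by (subst Bochner_Integration.integral_diff) (auto simp: M.emeasure_finite less_top[symmetric] M.prob_space)
  have int_sum: "integrable ?P (\<lambda>x. t * (\<Sum>u\<in>V. indicator (?C u) x :: real))"
    using C by (intro integrable_mult_right integrable_sum integrable_real_indicator)
      (auto simp: PP.P.emeasure_finite less_top[symmetric])
  have int_prod: "integrable ?P (\<lambda>x. \<Prod>u\<in>V. ?f u (x u))"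
    by (rule PP.product_integrable_prod[OF V fint])
  have integral_sum: "(\<integral>x. t * (\<Sum>u\<in>V. indicator (?C u) x) \<partial>?P) = t * (\<Sum>u\<in>V. measure ?P (?C u))"
  proof -
    have "(\<integral>x. (\<Sum>u\<in>V. indicator (?C u) x :: real) \<partial>?P) = (\<Sum>u\<in>V. \<integral>x. indicator (?C u) x \<partial>?P)"
      using C by (intro Bochner_Integration.integral_sum integrable_real_indicator)
        (auto simp: PP.P.emeasure_finite less_top[symmetric])
    also have "\<dots> = (\<Sum>u\<in>V. measure ?P (?C u))"
      using C by (intro sum.cong refl) (simp add: sets.Int_space_eq2)
    finally show ?thesis by simp
  qed
  have "measure ?P D = (\<integral>x. indicator D x \<partial>?P)"
    using D by simp
  also have "\<dots> \<le> (\<integral>x. t * (\<Sum>u\<in>V. indicator (?C u) x) + (\<Prod>u\<in>V. ?f u (x u)) \<partial>?P)"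
    using D covering_pointwise[OF V _ t] by (intro integral_mono Bochner_Integration.integrable_add int_sum int_prod)
       (auto simp: PP.P.emeasure_finite less_top[symmetric])
  also have "\<dots> = t * (\<Sum>u\<in>V. measure ?P (?C u)) + (1 - t * measure \<mu> E) ^ card V"
    unfolding Bochner_Integration.integral_add[OF int_sum int_prod] integral_sum
      PP.product_integral_prod[OF V fint] fI by simp
  also have "\<dots> \<le> t * real (card V) * a + (1 - t * measure \<mu> E) ^ card V"
  proof -
    have "(\<Sum>u\<in>V. measure ?P (?C u)) \<le> (\<Sum>u\<in>V. a)" using a by (intro sum_mono) auto
    then show ?thesis using t by (simp add: mult_left_mono mult.assoc)
  qed
  finally show ?thesis .
qed

section \<open>The failure bound and its limit\<close>

text \<open>For a set S of pairs (a, b) = (\<mu>1(E), \<mu>0(E)) this is the best bound of the form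
  t n a + (1 - t b)^n; the sequence q of the theorem is 1 minus it.\<close>
definition bound_terms :: "(real \<times> real) set \<Rightarrow> nat \<Rightarrow> real set" where
  "bound_terms S n = {t * real n * a + (1 - t * b) ^ n | t a b. 0 \<le> t \<and> t \<le> 1 \<and> (a, b) \<in> S}"

definition failure_bound :: "(real \<times> real) set \<Rightarrow> nat \<Rightarrow> real" where
  "failure_bound S n = Inf (bound_terms S n)"

locale probability_pairs =
  fixes S :: "(real \<times> real) set"
  assumes pairs_range: "\<And>a b. (a, b) \<in> S \<Longrightarrow> 0 \<le> a \<and> 0 \<le> b \<and> b \<le> 1"
begin

lemma bound_term_nonneg:
  assumes "(a, b) \<in> S" "0 \<le> t" "t \<le> 1"
  shows "0 \<le> t * real n * a + (1 - t * b) ^ n"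
proof -
  have "t * b \<le> 1" using pairs_range[OF assms(1)] assms(2,3) mult_le_one by blast
  then show ?thesis using pairs_range[OF assms(1)] assms(2) by simp
qed

lemma failure_bound_le:
  assumes "(a, b) \<in> S" "0 \<le> t" "t \<le> 1"
  shows "failure_bound S n \<le> t * real n * a + (1 - t * b) ^ n"
proof -
  have "bdd_below (bound_terms S n)"
    unfolding bdd_below_def bound_terms_def using bound_term_nonneg by blast
  then show ?thesis
    unfolding failure_bound_def by (rule cInf_lower[rotated]) (use assms in \<open>auto simp: bound_terms_def\<close>)
qed

lemma bound_terms_nonempty:
  assumes "S \<noteq> {}" shows "bound_terms S n \<noteq> {}"
proof -
  obtain a b where "(a, b) \<in> S" using assms by auto
  then have "0 * real n * a + (1 - 0 * b) ^ n \<in> bound_terms S n" unfolding bound_terms_def by force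
  then show ?thesis by blast
qed

lemma failure_bound_greatest:
  assumes "S \<noteq> {}"
    and "\<And>t a b. 0 \<le> t \<Longrightarrow> t \<le> 1 \<Longrightarrow> (a, b) \<in> S \<Longrightarrow> c \<le> t * real n * a + (1 - t * b) ^ n"
  shows "c \<le> failure_bound S n"
  unfolding failure_bound_def
  by (rule cInf_greatest[OF bound_terms_nonempty[OF assms(1)]]) (use assms(2) in \<open>auto simp: bound_terms_def\<close>)

lemma failure_bound_nonneg: "S \<noteq> {} \<Longrightarrow> 0 \<le> failure_bound S n"
  by (rule failure_bound_greatest) (auto intro: bound_term_nonneg)

text \<open>Choosing t = x / (n b) turns the bound into x a / b + e^{-x}.\<close>
lemma failure_bound_exp:
  assumes ab: "(a, b) \<in> S" "0 < b" and x: "0 < x" and n: "x / b \<le> real n"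
  shows "failure_bound S n \<le> x * a / b + exp (- x)"
proof -
  have b1: "b \<le> 1" using pairs_range[OF ab(1)] by simp
  have "x \<le> x / b" using b1 ab(2) x by (simp add: le_divide_eq mult_left_le)
  then have xn: "x \<le> real n" using n by linarith
  then have npos: "0 < real n" using x by linarith
  define t where "t = x / (real n * b)"
  have t: "0 \<le> t" "t \<le> 1" using n npos ab(2) x by (auto simp: t_def field_simps)
  have "failure_bound S n \<le> t * real n * a + (1 - t * b) ^ n"
    by (rule failure_bound_le[OF ab(1) t])
  also have "t * real n * a = x * a / b" using npos ab(2) by (simp add: t_def field_simps)
  also have "(1 - t * b) ^ n = (1 - x / real n) ^ n" using npos ab(2) by (simp add: t_def field_simps)
  also have "\<dots> \<le> exp (- x)" using exp_ge_one_minus_x_over_n_power_n[OF xn] npos by simp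
  finally show ?thesis by simp
qed

lemma failure_bound_tendsto_zero:
  assumes small_ratio: "\<And>\<delta>. 0 < \<delta> \<Longrightarrow> \<exists>(a, b)\<in>S. a \<le> \<delta> * b \<and> 0 < b"
  shows "failure_bound S \<longlonglongrightarrow> 0"
proof (rule LIMSEQ_I)
  fix r :: real assume r: "0 < r"
  define x where "x = 2 / r"
  have x: "0 < x" using r by (simp add: x_def)
  have "exp (- x) \<le> 1 / (1 + x)" using exp_ge_add_one_self[of x] x by (simp add: exp_minus field_simps)
  also have "\<dots> < r / 2" using x r by (simp add: x_def field_simps)
  finally have exp_small: "exp (- x) < r / 2" .
  obtain a b where ab: "(a, b) \<in> S" "a \<le> r / (2 * x) * b" "0 < b"
    using small_ratio[of "r / (2 * x)"] r x by auto
  have ratio_small: "x * a / b \<le> r / 2"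
  proof -
    have "x * a \<le> x * (r / (2 * x) * b)" using ab(2) x by (intro mult_left_mono) auto
    then show ?thesis using ab(3) x by (simp add: divide_le_eq)
  qed
  have "S \<noteq> {}" using ab(1) by blast
  show "\<exists>N. \<forall>n\<ge>N. norm (failure_bound S n - 0) < r"
  proof (intro exI allI impI)
    fix n assume "nat \<lceil>x / b\<rceil> \<le> n"
    then have "x / b \<le> real n" by linarith
    then have "failure_bound S n \<le> x * a / b + exp (- x)" by (rule failure_bound_exp[OF ab(1,3) x])
    with ratio_small exp_small have "failure_bound S n < r" by linarith
    with failure_bound_nonneg[OF \<open>S \<noteq> {}\<close>, of n] show "norm (failure_bound S n - 0) < r" by simp
  qed
qed

end

section \<open>The joint law of state and signals\<close>

locale binary_signal_model =
  fixes \<mu>0 \<mu>1 :: "'a measure"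
  assumes prob0: "prob_space \<mu>0" and prob1: "prob_space \<mu>1" and sets_eq: "sets \<mu>1 = sets \<mu>0"
begin

abbreviation cond_law :: "bool \<Rightarrow> nat set \<Rightarrow> (nat \<Rightarrow> 'a) measure" where
  "cond_law s V \<equiv> PiM V (\<lambda>v. if s then \<mu>1 else \<mu>0)"

abbreviation outcomes :: "nat set \<Rightarrow> (bool \<times> (nat \<Rightarrow> 'a)) measure" where
  "outcomes V \<equiv> count_space UNIV \<Otimes>\<^sub>M (\<Pi>\<^sub>M v\<in>V. \<mu>0)"

abbreviation J :: "nat set \<Rightarrow> (bool \<times> (nat \<Rightarrow> 'a)) measure" where
  "J V \<equiv> joint \<mu>0 \<mu>1 V"

lemma sets_cond_law: "sets (cond_law s V) = sets (PiM V (\<lambda>_. \<mu>0))"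
  by (rule sets_PiM_cong) (auto simp: sets_eq)

lemma space_cond_law: "space (cond_law s V) = space (PiM V (\<lambda>_. \<mu>0))"
  using sets_cond_law sets_eq_imp_space_eq by blast

lemma prob_space_cond_law: "prob_space (cond_law s V)"
  by (rule prob_space_PiM) (auto simp: prob0 prob1)

lemma pair_state_measurable: "Pair s \<in> measurable (cond_law s V) (outcomes V)"
  by (rule measurable_Pair[OF measurable_const measurable_ident_sets[OF sets_cond_law]]) simp

lemma cond_law_kernel_measurable:
  "(\<lambda>s. distr (cond_law s V) (outcomes V) (Pair s))
     \<in> measurable (measure_pmf (pmf_of_set UNIV)) (subprob_algebra (outcomes V))"
proof -
  have "(\<lambda>s. distr (cond_law s V) (outcomes V) (Pair s)) \<in> measurable (count_space UNIV) (subprob_algebra (outcomes V))"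
  proof (subst measurable_count_space_eq1, safe)
    fix s :: bool
    interpret P: prob_space "cond_law s V" by (rule prob_space_cond_law)
    show "distr (cond_law s V) (outcomes V) (Pair s) \<in> space (subprob_algebra (outcomes V))"
      unfolding space_subprob_algebra
      using P.prob_space_distr[OF pair_state_measurable] prob_space_imp_subprob_space by auto
  qed
  then show ?thesis by (subst measurable_cong_sets[OF sets_measure_pmf_count_space refl])
qed

lemma sets_joint: "sets (J V) = sets (outcomes V)"
  unfolding joint_def by (rule sets_bind) auto

lemma space_joint: "space (J V) = UNIV \<times> space (PiM V (\<lambda>_. \<mu>0))"
  using sets_eq_imp_space_eq[OF sets_joint] by (simp add: space_pair_measure)

lemma prob_space_joint: "prob_space (J V)"
  unfolding joint_def
proof (rule prob_space.prob_space_bind[where S="outcomes V"])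
  show "AE s in measure_pmf (pmf_of_set UNIV). prob_space (distr (cond_law s V) (outcomes V) (Pair s))"
  proof (rule AE_I2)
    fix s :: bool
    interpret P: prob_space "cond_law s V" by (rule prob_space_cond_law)
    show "prob_space (distr (cond_law s V) (outcomes V) (Pair s))"
      using P.prob_space_distr[OF pair_state_measurable] by simp
  qed
  show "(\<lambda>s. distr (cond_law s V) (outcomes V) (Pair s))
      \<in> measurable (measure_pmf (pmf_of_set UNIV)) (subprob_algebra (outcomes V))"
    by (rule cond_law_kernel_measurable)
qed (simp add: measure_pmf.prob_space_axioms)

lemma state_signal_event_eq:
  assumes "D \<subseteq> space (PiM V (\<lambda>_. \<mu>0))"
  shows "{\<omega> \<in> space (J V). P (state \<omega>) \<and> snd \<omega> \<in> D} = {s. P s} \<times> D"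
  using assms by (auto simp: space_joint state_def)

lemma state_signal_event_sets:
  assumes "D \<in> sets (PiM V (\<lambda>_. \<mu>0))"
  shows "{\<omega> \<in> space (J V). P (state \<omega>) \<and> snd \<omega> \<in> D} \<in> sets (J V)"
  using assms state_signal_event_eq[OF sets.sets_into_space[OF assms]] by (simp add: sets_joint)

lemma state_event_sets: "{\<omega> \<in> space (J V). state \<omega>} \<in> sets (J V)"
proof -
  have "{\<omega> \<in> space (J V). state \<omega>} = {\<omega> \<in> space (J V). state \<omega> \<and> snd \<omega> \<in> space (PiM V (\<lambda>_. \<mu>0))}"
    by (auto simp: space_joint)
  then show ?thesis using state_signal_event_sets[OF sets.top, of V "\<lambda>s. s"] by simp
qed

lemma emeasure_joint_state_slice:
  assumes D: "D \<in> sets (PiM V (\<lambda>_. \<mu>0))"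
  shows "emeasure (J V) {\<omega> \<in> space (J V). state \<omega> = s \<and> snd \<omega> \<in> D} = emeasure (cond_law s V) D / 2"
proof -
  let ?X = "{\<omega> \<in> space (J V). state \<omega> = s \<and> snd \<omega> \<in> D}"
  have X: "?X = {s} \<times> D"
    using sets.sets_into_space[OF D] by (auto simp: space_joint state_def)
  have Xs: "?X \<in> sets (outcomes V)" unfolding X using D by auto
  have slice: "emeasure (distr (cond_law t V) (outcomes V) (Pair t)) ?X = (if t = s then emeasure (cond_law s V) D else 0)"
    for t
  proof -
    have "Pair t -` ?X \<inter> space (cond_law t V) = (if t = s then D else {})"
      using sets.sets_into_space[OF D] by (auto simp: X space_cond_law)
    then show ?thesis by (simp add: emeasure_distr[OF pair_state_measurable Xs])
  qed
  have "emeasure (J V) ?X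
      = \<integral>\<^sup>+t. emeasure (distr (cond_law t V) (outcomes V) (Pair t)) ?X \<partial>measure_pmf (pmf_of_set UNIV)"
    using emeasure_bind[OF _ cond_law_kernel_measurable Xs] by (simp add: joint_def)
  also have "\<dots> = (\<Sum>t\<in>UNIV. emeasure (distr (cond_law t V) (outcomes V) (Pair t)) ?X) / 2"
    by (subst nn_integral_pmf_of_set) auto
  also have "\<dots> = emeasure (cond_law s V) D / 2"
    by (simp only: slice) (simp add: sum.delta)
  finally show ?thesis .
qed

lemma measure_joint_state_slice:
  assumes D: "D \<in> sets (PiM V (\<lambda>_. \<mu>0))"
  shows "measure (J V) {\<omega> \<in> space (J V). state \<omega> = s \<and> snd \<omega> \<in> D} = measure (cond_law s V) D / 2"
proof -
  interpret P: prob_space "cond_law s V" by (rule prob_space_cond_law)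
  have "emeasure (J V) {\<omega> \<in> space (J V). state \<omega> = s \<and> snd \<omega> \<in> D} = ennreal (measure (cond_law s V) D / 2)"
    using emeasure_joint_state_slice[OF D, of s]
    by (simp only: P.emeasure_eq_measure ennreal_divide_numeral[OF measure_nonneg])
  then show ?thesis by (simp add: measure_def)
qed

lemma state_signal_component_event_sets:
  assumes u: "u \<in> V" and E: "E \<in> sets \<mu>0"
  shows "{\<omega> \<in> space (J V). P (state \<omega>) \<and> snd \<omega> u \<in> E} \<in> sets (J V)"
proof -
  have "{x\<in>space (PiM V (\<lambda>_. \<mu>0)). x u \<in> E} \<in> sets (PiM V (\<lambda>_. \<mu>0))" using E u by measurable
  from state_signal_event_sets[OF this, of P] show ?thesis
    by (rule back_subst[of "\<lambda>A. A \<in> sets (J V)"]) (auto simp: space_joint)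
qed

lemma measure_joint_signal_event:
  assumes u: "u \<in> V" and E: "E \<in> sets \<mu>0"
  shows "measure (J V) {\<omega> \<in> space (J V). state \<omega> = s \<and> snd \<omega> u \<in> E} = measure (if s then \<mu>1 else \<mu>0) E / 2"
proof -
  let ?m = "if s then \<mu>1 else \<mu>0"
  let ?Cu = "{x\<in>space (PiM V (\<lambda>_. \<mu>0)). x u \<in> E}"
  have Cu: "?Cu \<in> sets (PiM V (\<lambda>_. \<mu>0))" using E u by measurable
  interpret PP: product_prob_space "\<lambda>_. ?m" V
    by (simp add: product_prob_space_def product_prob_space_axioms_def product_sigma_finite_def
        prob0 prob1 prob_space_imp_sigma_finite)
  have "?Cu = {x\<in>space (PiM V (\<lambda>_. ?m)). x u \<in> E}" using space_cond_law[of V s] by simp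
  then have "measure (cond_law s V) ?Cu = measure ?m E"
    using PP.emeasure_PiM_Collect_single[OF u, of E] E sets_eq by (simp add: measure_def)
  moreover have "{\<omega> \<in> space (J V). state \<omega> = s \<and> snd \<omega> u \<in> E} = {\<omega> \<in> space (J V). state \<omega> = s \<and> snd \<omega> \<in> ?Cu}"
    by (auto simp: space_joint)
  ultimately show ?thesis using measure_joint_state_slice[OF Cu, of s] by simp
qed

lemma measure_state_split:
  assumes G: "G \<in> sets (J V)"
  shows "measure (J V) G = measure (J V) {\<omega>\<in>G. state \<omega>} + measure (J V) {\<omega>\<in>G. \<not> state \<omega>}"
proof -
  interpret P: prob_space "J V" by (rule prob_space_joint)
  have "{\<omega>\<in>G. state \<omega>} = G \<inter> {\<omega> \<in> space (J V). state \<omega>}"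
    using sets.sets_into_space[OF G] by auto
  then have S: "{\<omega>\<in>G. state \<omega>} \<in> sets (J V)" using G state_event_sets by auto
  have "{\<omega>\<in>G. \<not> state \<omega>} = G - {\<omega>\<in>G. state \<omega>}" by auto
  then have N: "{\<omega>\<in>G. \<not> state \<omega>} \<in> sets (J V)" using G S by auto
  have "G = {\<omega>\<in>G. state \<omega>} \<union> {\<omega>\<in>G. \<not> state \<omega>}" by auto
  then show ?thesis using P.finite_measure_Union[OF S N] by auto
qed

end
section \<open>Posterior beliefs\<close>

context binary_signal_model
begin

lemma post_belief_set_integral:
  assumes sub: "subalgebra (J V) F" and G: "G \<in> sets F"
  shows "integrable (J V) (post_belief \<mu>0 \<mu>1 V F)"
    and "(LINT \<omega>:G|J V. post_belief \<mu>0 \<mu>1 V F \<omega>) = measure (J V) {\<omega>\<in>G. state \<omega>}"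
proof -
  interpret P: prob_space "J V" by (rule prob_space_joint)
  interpret S: finite_measure_subalgebra "J V" F
    by unfold_locales (rule sub)
  let ?S = "{\<omega> \<in> space (J V). state \<omega>}"
  have "integrable (J V) (indicator ?S :: _ \<Rightarrow> real)"
    by (rule integrable_real_indicator[OF state_event_sets]) (simp add: P.emeasure_finite less_top[symmetric])
  then have int: "integrable (J V) (indicator {\<omega>. state \<omega>} :: _ \<Rightarrow> real)"
    by (rule Bochner_Integration.integrable_cong[THEN iffD1, rotated -1]) (auto simp: indicator_def)
  show "integrable (J V) (post_belief \<mu>0 \<mu>1 V F)"
    unfolding post_belief_def by (rule S.real_cond_exp_int(1)[OF int])
  have GJ: "G \<in> sets (J V)" using G sub by (auto simp: subalgebra_def)
  have ind: "(\<lambda>x. indicator G x *\<^sub>R indicator {\<omega>. state \<omega>} x) = (indicator {\<omega>\<in>G. state \<omega>} :: _ \<Rightarrow> real)"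
    by (auto simp: indicator_def)
  have sp: "{\<omega>\<in>G. state \<omega>} \<inter> space (J V) = {\<omega>\<in>G. state \<omega>}" using sets.sets_into_space[OF GJ] by auto
  have "(LINT \<omega>:G|J V. post_belief \<mu>0 \<mu>1 V F \<omega>) = (LINT \<omega>:G|J V. indicator {\<omega>. state \<omega>} \<omega>)"
    unfolding post_belief_def by (rule S.real_cond_exp_intA[OF int G, symmetric])
  also have "\<dots> = measure (J V) {\<omega>\<in>G. state \<omega>}"
    unfolding set_lebesgue_integral_def ind using sp by simp
  finally show "(LINT \<omega>:G|J V. post_belief \<mu>0 \<mu>1 V F \<omega>) = measure (J V) {\<omega>\<in>G. state \<omega>}" .
qed

lemma post_belief_bounds:
  assumes sub: "subalgebra (J V) F" and G: "G \<in> sets F"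
  shows "(\<And>\<omega>. \<omega> \<in> G \<Longrightarrow> c \<le> post_belief \<mu>0 \<mu>1 V F \<omega>) \<Longrightarrow> c * measure (J V) G \<le> measure (J V) {\<omega>\<in>G. state \<omega>}"
    and "(\<And>\<omega>. \<omega> \<in> G \<Longrightarrow> post_belief \<mu>0 \<mu>1 V F \<omega> \<le> c) \<Longrightarrow> measure (J V) {\<omega>\<in>G. state \<omega>} \<le> c * measure (J V) G"
proof -
  interpret P: prob_space "J V" by (rule prob_space_joint)
  have GJ: "G \<in> sets (J V)" using G sub by (auto simp: subalgebra_def)
  have const: "c * measure (J V) G = (LINT \<omega>:G|J V. c)"
    using set_integral_const[OF GJ, of c] by (simp add: P.emeasure_finite)
  have int_const: "set_integrable (J V) G (\<lambda>_. c)" unfolding set_integrable_def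
    by (rule integrable_mult_indicator[OF GJ]) simp
  have int_post: "set_integrable (J V) G (post_belief \<mu>0 \<mu>1 V F)" unfolding set_integrable_def
    by (rule integrable_mult_indicator[OF GJ post_belief_set_integral(1)[OF sub G]])
  note post = post_belief_set_integral(2)[OF sub G]
  show "c * measure (J V) G \<le> measure (J V) {\<omega>\<in>G. state \<omega>}"
    if "\<And>\<omega>. \<omega> \<in> G \<Longrightarrow> c \<le> post_belief \<mu>0 \<mu>1 V F \<omega>"
    using set_integral_mono[OF int_const int_post that] by (simp add: const post)
  show "measure (J V) {\<omega>\<in>G. state \<omega>} \<le> c * measure (J V) G"
    if "\<And>\<omega>. \<omega> \<in> G \<Longrightarrow> post_belief \<mu>0 \<mu>1 V F \<omega> \<le> c"
    using set_integral_mono[OF int_post int_const that] by (simp add: const post)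
qed

lemma post_belief_high_event:
  assumes sub: "subalgebra (J V) F" and G: "G \<in> sets F"
    and high: "\<And>\<omega>. \<omega> \<in> G \<Longrightarrow> 1/2 \<le> post_belief \<mu>0 \<mu>1 V F \<omega>"
  shows "measure (J V) {\<omega>\<in>G. \<not> state \<omega>} \<le> measure (J V) {\<omega>\<in>G. state \<omega>}"
proof -
  have GJ: "G \<in> sets (J V)" using G sub by (auto simp: subalgebra_def)
  have "1/2 * measure (J V) G \<le> measure (J V) {\<omega>\<in>G. state \<omega>}"
    by (rule post_belief_bounds(1)[OF sub G high])
  then show ?thesis using measure_state_split[OF GJ] by simp
qed

section \<open>Information algebras\<close>

lemma signal_space: "u \<in> V \<Longrightarrow> signal u \<in> space (J V) \<rightarrow> space \<mu>0"
  by (auto simp: space_joint signal_def space_PiM)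

lemma signal_event_in_sig_signal:
  assumes "E \<in> sets \<mu>0"
  shows "{\<omega>\<in>space (J V). snd \<omega> u \<in> E} \<in> sets (sig_signal \<mu>0 \<mu>1 V u)"
proof -
  have "{\<omega>\<in>space (J V). snd \<omega> u \<in> E} = signal u -` E \<inter> space (J V)"
    by (auto simp: signal_def)
  then show ?thesis unfolding sig_signal_def using in_vimage_algebra[OF assms] by simp
qed

lemma sig_signal_events:
  assumes "u \<in> V" "G \<in> sets (sig_signal \<mu>0 \<mu>1 V u)"
  obtains E where "E \<in> sets \<mu>0" "G = {\<omega>\<in>space (J V). snd \<omega> u \<in> E}"
proof -
  from assms(2) obtain E where "E \<in> sets \<mu>0" "G = signal u -` E \<inter> space (J V)"
    unfolding sig_signal_def sets_vimage_algebra2[OF signal_space[OF assms(1)]] by auto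
  moreover have "signal u -` E \<inter> space (J V) = {\<omega>\<in>space (J V). snd \<omega> u \<in> E}"
    by (auto simp: signal_def)
  ultimately show ?thesis using that by simp
qed

lemma sig_all_signals_events:
  assumes "G \<in> sets (sig_all_signals \<mu>0 \<mu>1 V)"
  obtains D where "D \<in> sets (PiM V (\<lambda>_. \<mu>0))" "G = {\<omega>\<in>space (J V). snd \<omega> \<in> D}"
proof -
  let ?W = "vimage_algebra (space (J V)) snd (PiM V (\<lambda>_. \<mu>0))"
  have sp: "snd \<in> space (J V) \<rightarrow> space (PiM V (\<lambda>_. \<mu>0))" by (auto simp: space_joint)
  have gen: "(\<Union>v\<in>V. sets (sig_signal \<mu>0 \<mu>1 V v)) \<subseteq> sets ?W"
  proof safe
    fix v G assume v: "v \<in> V" and G: "G \<in> sets (sig_signal \<mu>0 \<mu>1 V v)"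
    then obtain E where E: "E \<in> sets \<mu>0" "G = {\<omega>\<in>space (J V). snd \<omega> v \<in> E}"
      by (rule sig_signal_events)
    have GE: "G = snd -` {x\<in>space (PiM V (\<lambda>_. \<mu>0)). x v \<in> E} \<inter> space (J V)"
      using E(2) by (auto simp: space_joint)
    have "{x\<in>space (PiM V (\<lambda>_. \<mu>0)). x v \<in> E} \<in> sets (PiM V (\<lambda>_. \<mu>0))"
      using E(1) v by measurable
    from in_vimage_algebra[OF this, of snd "space (J V)"] show "G \<in> sets ?W" using GE by simp
  qed
  have "sets (sig_signal \<mu>0 \<mu>1 V v) \<subseteq> Pow (space (J V))" for v
    using sets.space_closed[of "sig_signal \<mu>0 \<mu>1 V v"] unfolding sig_signal_def space_vimage_algebra .
  then have gen_space: "(\<Union>v\<in>V. sets (sig_signal \<mu>0 \<mu>1 V v)) \<subseteq> Pow (space (J V))" by blast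
  have "sets (sig_all_signals \<mu>0 \<mu>1 V) \<subseteq> sets ?W"
    unfolding sig_all_signals_def sets_measure_of[OF gen_space] using sets.sigma_sets_subset[OF gen] by simp
  with assms obtain D where "D \<in> sets (PiM V (\<lambda>_. \<mu>0))" "G = snd -` D \<inter> space (J V)"
    unfolding sets_vimage_algebra2[OF sp] by auto
  then show ?thesis using that by auto
qed

lemma info_algebra_events:
  assumes "info_algebra \<mu>0 \<mu>1 V u F" "G \<in> sets F"
  obtains D where "D \<in> sets (PiM V (\<lambda>_. \<mu>0))" "G = {\<omega>\<in>space (J V). snd \<omega> \<in> D}"
  using assms sig_all_signals_events unfolding info_algebra_def by blast

lemma info_algebra_subalgebra:
  assumes "info_algebra \<mu>0 \<mu>1 V u F"
  shows "subalgebra (J V) F"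
proof -
  have "G \<in> sets (J V)" if G: "G \<in> sets F" for G
  proof -
    obtain D where "D \<in> sets (PiM V (\<lambda>_. \<mu>0))" "G = {\<omega>\<in>space (J V). snd \<omega> \<in> D}"
      using info_algebra_events[OF assms G] by blast
    then show ?thesis using state_signal_event_sets[of D V "\<lambda>_. True"] by simp
  qed
  then show ?thesis using assms unfolding info_algebra_def subalgebra_def by blast
qed

lemma posterior_signal_event_sets:
  assumes info: "info_algebra \<mu>0 \<mu>1 V u F" and E: "E \<in> sets \<mu>0"
  shows "{\<omega>\<in>space (J V). c \<le> post_belief \<mu>0 \<mu>1 V F \<omega> \<and> snd \<omega> u \<in> E} \<in> sets F"
proof -
  have spF: "space F = space (J V)" using info unfolding info_algebra_def by blast
  have "post_belief \<mu>0 \<mu>1 V F \<in> borel_measurable F"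
    unfolding post_belief_def by (rule borel_measurable_cond_exp)
  then have "{\<omega>\<in>space F. c \<le> post_belief \<mu>0 \<mu>1 V F \<omega>} \<in> sets F" by measurable
  moreover have "{\<omega>\<in>space (J V). snd \<omega> u \<in> E} \<in> sets F"
    using signal_event_in_sig_signal[OF E] info unfolding info_algebra_def by blast
  ultimately have "{\<omega>\<in>space F. c \<le> post_belief \<mu>0 \<mu>1 V F \<omega>} \<inter> {\<omega>\<in>space (J V). snd \<omega> u \<in> E} \<in> sets F"
    by auto
  then show ?thesis by (rule back_subst[of "\<lambda>A. A \<in> sets F"]) (auto simp: spF)
qed

lemma sig_signal_info_algebra: "info_algebra \<mu>0 \<mu>1 {0} 0 (sig_signal \<mu>0 \<mu>1 {0} 0)"
proof -
  have sub: "(\<Union>v\<in>{0::nat}. sets (sig_signal \<mu>0 \<mu>1 {0} v)) \<subseteq> Pow (space (J {0}))"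
    using sets.space_closed[of "sig_signal \<mu>0 \<mu>1 {0} 0"] unfolding sig_signal_def space_vimage_algebra by simp
  have "sets (sig_signal \<mu>0 \<mu>1 {0} 0) \<subseteq> sets (sig_all_signals \<mu>0 \<mu>1 {0})"
    unfolding sig_all_signals_def sets_measure_of[OF sub] by (auto intro: sigma_sets.Basic)
  then show ?thesis unfolding info_algebra_def by (simp add: sig_signal_def)
qed

end

section \<open>Probability of a wrong common action in state 0\<close>

context binary_signal_model
begin

lemma opt_actions_ne_0_iff: "opt_actions x \<noteq> {0} \<longleftrightarrow> 1/2 \<le> x"
  by (auto simp: opt_actions_def)

definition error_event :: "nat set \<Rightarrow> (bool \<times> (nat \<Rightarrow> 'a) \<Rightarrow> nat set) \<Rightarrow> (nat \<Rightarrow> 'a) set" where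
  "error_event V L = {x \<in> space (PiM V (\<lambda>_. \<mu>0)). L (False, x) \<noteq> {0}}"

lemma error_event_sets:
  assumes L: "L \<in> measurable (J V) (count_space UNIV)"
  shows "error_event V L \<in> sets (PiM V (\<lambda>_. \<mu>0))"
proof -
  have "L \<in> measurable (outcomes V) (count_space UNIV)"
    using L by (subst (asm) measurable_cong_sets[OF sets_joint refl])
  moreover have "(\<lambda>x. (False, x)) \<in> measurable (PiM V (\<lambda>_. \<mu>0)) (outcomes V)"
    by measurable
  ultimately have "(\<lambda>x. L (False, x)) \<in> measurable (PiM V (\<lambda>_. \<mu>0)) (count_space UNIV)"
    by (simp add: measurable_compose[where f="\<lambda>x. (False, x)"])
  from measurable_sets[OF this, of "UNIV - {{0}}"] show ?thesis
    unfolding error_event_def by (simp add: vimage_def Int_def conj_commute)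
qed

text \<open>On the F_u-measurable
  event G = {X_u \<ge> 1/2, W_u \<in> E} the posterior is at least 1/2, so P(G, S = 0) \<le> P(G, S = 1),
  and P(G, S = 1) \<le> P(W_u \<in> E, S = 1) = \<mu>1(E) / 2; a.s. G \<inter> {S = 0} is the event in question.\<close>
lemma agent_error_bound:
  assumes u: "u \<in> V" and info: "info_algebra \<mu>0 \<mu>1 V u F"
    and L: "L \<in> measurable (J V) (count_space UNIV)"
    and agree: "AE \<omega> in J V. L \<omega> = opt_actions (post_belief \<mu>0 \<mu>1 V F \<omega>)"
    and E: "E \<in> sets \<mu>0"
  shows "measure (cond_law False V) (error_event V L \<inter> {x\<in>space (PiM V (\<lambda>_. \<mu>0)). x u \<in> E}) \<le> measure \<mu>1 E"
proof -
  interpret P: prob_space "J V" by (rule prob_space_joint)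
  let ?X = "post_belief \<mu>0 \<mu>1 V F"
  let ?Cu = "{x\<in>space (PiM V (\<lambda>_. \<mu>0)). x u \<in> E}"
  let ?G = "{\<omega>\<in>space (J V). 1/2 \<le> ?X \<omega> \<and> snd \<omega> u \<in> E}"
  have sub: "subalgebra (J V) F" by (rule info_algebra_subalgebra[OF info])
  have GF: "?G \<in> sets F" by (rule posterior_signal_event_sets[OF info E])
  obtain D where D: "D \<in> sets (PiM V (\<lambda>_. \<mu>0))" "?G = {\<omega>\<in>space (J V). snd \<omega> \<in> D}"
    using info_algebra_events[OF info GF] by blast
  have state0_le_state1: "measure (J V) {\<omega>\<in>?G. \<not> state \<omega>} \<le> measure (J V) {\<omega>\<in>?G. state \<omega>}"
    by (rule post_belief_high_event[OF sub GF]) auto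
  have "measure (J V) {\<omega>\<in>?G. state \<omega>} \<le> measure (J V) {\<omega>\<in>space (J V). state \<omega> = True \<and> snd \<omega> u \<in> E}"
    by (intro P.finite_measure_mono state_signal_component_event_sets[OF u E]) auto
  also have "\<dots> = measure \<mu>1 E / 2" using measure_joint_signal_event[OF u E, of True] by simp
  finally have state1: "measure (J V) {\<omega>\<in>?G. state \<omega>} \<le> measure \<mu>1 E / 2" .
  have err: "error_event V L \<inter> ?Cu \<in> sets (PiM V (\<lambda>_. \<mu>0))"
    using error_event_sets[OF L] E u by measurable
  have "measure (J V) {\<omega>\<in>?G. \<not> state \<omega>}
      = measure (J V) {\<omega>\<in>space (J V). state \<omega> = False \<and> snd \<omega> \<in> error_event V L \<inter> ?Cu}"
  proof (rule measure_eq_AE)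
    show "AE \<omega> in J V. (\<omega> \<in> {\<omega>\<in>?G. \<not> state \<omega>})
        = (\<omega> \<in> {\<omega>\<in>space (J V). state \<omega> = False \<and> snd \<omega> \<in> error_event V L \<inter> ?Cu})"
      using agree
    proof (rule AE_mp, intro AE_I2 impI)
      fix \<omega> assume w: "\<omega> \<in> space (J V)" and L\<omega>: "L \<omega> = opt_actions (?X \<omega>)"
      obtain s x where sx: "\<omega> = (s, x)" by (cases \<omega>)
      have "x \<in> space (PiM V (\<lambda>_. \<mu>0))" using w sx by (auto simp: space_joint)
      moreover have "L (s, x) \<noteq> {0} \<longleftrightarrow> 1/2 \<le> ?X (s, x)" using L\<omega> opt_actions_ne_0_iff sx by simp
      ultimately show "(\<omega> \<in> {\<omega>\<in>?G. \<not> state \<omega>})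
          = (\<omega> \<in> {\<omega>\<in>space (J V). state \<omega> = False \<and> snd \<omega> \<in> error_event V L \<inter> ?Cu})"
        using w unfolding sx state_def error_event_def by (cases s) simp_all
    qed
    have "{\<omega>\<in>?G. \<not> state \<omega>} = {\<omega>\<in>space (J V). \<not> state \<omega> \<and> snd \<omega> \<in> D}"
      unfolding D(2) by blast
    then show "{\<omega>\<in>?G. \<not> state \<omega>} \<in> sets (J V)" using state_signal_event_sets[OF D(1)] by simp
    show "{\<omega>\<in>space (J V). state \<omega> = False \<and> snd \<omega> \<in> error_event V L \<inter> ?Cu} \<in> sets (J V)"
      by (rule state_signal_event_sets[OF err])
  qed
  also have "\<dots> = measure (cond_law False V) (error_event V L \<inter> ?Cu) / 2"
    by (rule measure_joint_state_slice[OF err])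
  finally show ?thesis using state0_le_state1 state1 by simp
qed

lemma correct_action_bound:
  assumes fin: "finite V" and info: "\<forall>u\<in>V. info_algebra \<mu>0 \<mu>1 V u (F u)"
    and L: "L \<in> measurable (J V) (count_space UNIV)"
    and agree: "\<forall>u\<in>V. AE \<omega> in J V. L \<omega> = opt_actions (post_belief \<mu>0 \<mu>1 V (F u) \<omega>)"
    and E: "E \<in> sets \<mu>0" and t: "0 \<le> t" "t \<le> 1"
  shows "1 - (t * real (card V) * measure \<mu>1 E + (1 - t * measure \<mu>0 E) ^ card V)
     \<le> measure (J V) {\<omega> \<in> space (J V). L \<omega> = {0} \<and> \<not> state \<omega>}
        / measure (J V) {\<omega> \<in> space (J V). \<not> state \<omega>}"
proof -
  let ?P0 = "PiM V (\<lambda>_. \<mu>0)"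
  interpret P0: prob_space ?P0 by (rule prob_space_PiM) (rule prob0)
  have err: "error_event V L \<in> sets ?P0" by (rule error_event_sets[OF L])
  have bound: "measure ?P0 (error_event V L) \<le> t * real (card V) * measure \<mu>1 E + (1 - t * measure \<mu>0 E) ^ card V"
  proof (rule product_covering_bound[OF prob0 fin err E t])
    fix u assume u: "u \<in> V"
    show "measure ?P0 (error_event V L \<inter> {x \<in> space ?P0. x u \<in> E}) \<le> measure \<mu>1 E"
      using agent_error_bound[OF u _ L _ E, of "F u"] info agree u by simp
  qed
  have "{\<omega> \<in> space (J V). \<not> state \<omega>} = {\<omega> \<in> space (J V). state \<omega> = False \<and> snd \<omega> \<in> space ?P0}"
    by (auto simp: space_joint)
  then have den: "measure (J V) {\<omega> \<in> space (J V). \<not> state \<omega>} = 1/2"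
    using measure_joint_state_slice[OF sets.top, of V False] P0.prob_space by simp
  have "{\<omega> \<in> space (J V). L \<omega> = {0} \<and> \<not> state \<omega>}
      = {\<omega> \<in> space (J V). state \<omega> = False \<and> snd \<omega> \<in> space ?P0 - error_event V L}"
  proof (rule set_eqI)
    fix \<omega> :: "bool \<times> (nat \<Rightarrow> 'a)"
    obtain s x where sx: "\<omega> = (s, x)" by (cases \<omega>)
    show "\<omega> \<in> {\<omega> \<in> space (J V). L \<omega> = {0} \<and> \<not> state \<omega>}
        \<longleftrightarrow> \<omega> \<in> {\<omega> \<in> space (J V). state \<omega> = False \<and> snd \<omega> \<in> space ?P0 - error_event V L}"
      unfolding sx error_event_def by (cases s) (simp_all add: space_joint state_def, blast)
  qed
  moreover have "space ?P0 - error_event V L \<in> sets ?P0" using err by auto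
  moreover have "measure ?P0 (space ?P0 - error_event V L) = 1 - measure ?P0 (error_event V L)"
    using P0.prob_compl[OF err] by simp
  ultimately have num: "measure (J V) {\<omega> \<in> space (J V). L \<omega> = {0} \<and> \<not> state \<omega>}
      = (1 - measure ?P0 (error_event V L)) / 2"
    using measure_joint_state_slice[of "space ?P0 - error_event V L" V False] by simp
  show ?thesis using bound by (simp add: den num)
qed

definition likelihood_pairs :: "(real \<times> real) set" where
  "likelihood_pairs = {(measure \<mu>1 E, measure \<mu>0 E) | E. E \<in> sets \<mu>0}"

sublocale likelihood: probability_pairs likelihood_pairs
  by unfold_locales (auto simp: likelihood_pairs_def prob_space.prob_le_1[OF prob0])

lemma likelihood_pairs_nonempty: "likelihood_pairs \<noteq> {}"
  unfolding likelihood_pairs_def by blast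

lemma correct_action_failure_bound:
  assumes "finite V" and "\<forall>u\<in>V. info_algebra \<mu>0 \<mu>1 V u (F u)"
    and "L \<in> measurable (J V) (count_space UNIV)"
    and "\<forall>u\<in>V. AE \<omega> in J V. L \<omega> = opt_actions (post_belief \<mu>0 \<mu>1 V (F u) \<omega>)"
  shows "1 - failure_bound likelihood_pairs (card V)
     \<le> measure (J V) {\<omega> \<in> space (J V). L \<omega> = {0} \<and> \<not> state \<omega>}
        / measure (J V) {\<omega> \<in> space (J V). \<not> state \<omega>}" (is "_ \<le> ?ratio")
proof -
  have "1 - ?ratio \<le> failure_bound likelihood_pairs (card V)"
  proof (rule likelihood.failure_bound_greatest[OF likelihood_pairs_nonempty])
    fix t a b :: real assume t: "0 \<le> t" "t \<le> 1" and "(a, b) \<in> likelihood_pairs"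
    then obtain E where E: "E \<in> sets \<mu>0" "a = measure \<mu>1 E" "b = measure \<mu>0 E"
      by (auto simp: likelihood_pairs_def)
    from correct_action_bound[OF assms E(1) t]
    show "1 - ?ratio \<le> t * real (card V) * a + (1 - t * b) ^ card V" by (simp add: E(2,3))
  qed
  then show ?thesis by linarith
qed

text \<open>Unbounded private beliefs yield events with arbitrarily small likelihood ratio
  \<mu>1(E) / \<mu>0(E): take E with {B < \<epsilon>} = {W_0 \<in> E} in the one-agent model; there
  P(E, S = 1) \<le> \<epsilon> P(E), i.e. \<mu>1(E) \<le> \<epsilon> (\<mu>0(E) + \<mu>1(E)).\<close>
lemma small_likelihood_ratio_event:
  assumes ac: "absolutely_continuous \<mu>0 \<mu>1" and \<delta>: "0 < \<delta>"
    and unbounded: "\<forall>\<epsilon>>0. 0 < measure (J {0}) {\<omega> \<in> space (J {0}). priv_belief \<mu>0 \<mu>1 \<omega> < \<epsilon>}"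
  obtains E where "E \<in> sets \<mu>0" "measure \<mu>1 E \<le> \<delta> * measure \<mu>0 E" "0 < measure \<mu>0 E"
proof -
  define \<epsilon> where "\<epsilon> = min (1/2) (\<delta> / 2)"
  have \<epsilon>: "0 < \<epsilon>" "\<epsilon> \<le> 1/2" "2 * \<epsilon> \<le> \<delta>" using \<delta> by (auto simp: \<epsilon>_def)
  let ?F = "sig_signal \<mu>0 \<mu>1 {0} 0"
  let ?G = "{\<omega> \<in> space (J {0}). priv_belief \<mu>0 \<mu>1 \<omega> < \<epsilon>}"
  have sub: "subalgebra (J {0}) ?F" by (rule info_algebra_subalgebra[OF sig_signal_info_algebra])
  have spF: "space ?F = space (J {0})" using sig_signal_info_algebra unfolding info_algebra_def by blast
  have "priv_belief \<mu>0 \<mu>1 \<in> borel_measurable ?F"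
    unfolding priv_belief_def post_belief_def by (rule borel_measurable_cond_exp)
  then have "{\<omega> \<in> space ?F. priv_belief \<mu>0 \<mu>1 \<omega> < \<epsilon>} \<in> sets ?F" by measurable
  then have GF: "?G \<in> sets ?F" using spF by simp
  obtain E where E: "E \<in> sets \<mu>0" "?G = {\<omega>\<in>space (J {0}). snd \<omega> 0 \<in> E}"
    by (rule sig_signal_events[OF singletonI GF])
  have GJ: "?G \<in> sets (J {0})" using GF sub by (auto simp: subalgebra_def)
  have slice: "measure (J {0}) {\<omega>\<in>?G. state \<omega> = s} = measure (if s then \<mu>1 else \<mu>0) E / 2" for s
  proof -
    have "{\<omega>\<in>?G. state \<omega> = s} = {\<omega> \<in> space (J {0}). state \<omega> = s \<and> snd \<omega> 0 \<in> E}"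
      unfolding E(2) by blast
    then show ?thesis using measure_joint_signal_event[OF singletonI E(1), where s=s] by simp
  qed
  have slice1: "measure (J {0}) {\<omega>\<in>?G. state \<omega>} = measure \<mu>1 E / 2" using slice[of True] by simp
  have slice0: "measure (J {0}) {\<omega>\<in>?G. \<not> state \<omega>} = measure \<mu>0 E / 2" using slice[of False] by simp
  have "measure (J {0}) {\<omega>\<in>?G. state \<omega>} \<le> \<epsilon> * measure (J {0}) ?G"
    by (rule post_belief_bounds(2)[OF sub GF]) (auto simp: priv_belief_def)
  then have "measure \<mu>1 E / 2 \<le> \<epsilon> * (measure \<mu>1 E / 2 + measure \<mu>0 E / 2)"
    unfolding measure_state_split[OF GJ] slice1 slice0 .
  then have "measure \<mu>1 E \<le> \<epsilon> * (measure \<mu>1 E + measure \<mu>0 E)"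
    by (simp add: field_simps)
  then have "(1 - \<epsilon>) * measure \<mu>1 E \<le> \<epsilon> * measure \<mu>0 E" by (simp add: algebra_simps)
  moreover have "measure \<mu>1 E / 2 \<le> (1 - \<epsilon>) * measure \<mu>1 E"
    using mult_right_mono[OF \<open>\<epsilon> \<le> 1/2\<close> measure_nonneg[of \<mu>1 E]] by (simp add: algebra_simps)
  moreover have "2 * \<epsilon> * measure \<mu>0 E \<le> \<delta> * measure \<mu>0 E"
    using mult_right_mono[OF \<open>2 * \<epsilon> \<le> \<delta>\<close> measure_nonneg[of \<mu>0 E]] .
  ultimately have ratio: "measure \<mu>1 E \<le> \<delta> * measure \<mu>0 E" by linarith
  have "0 < measure \<mu>0 E"
  proof (rule ccontr)
    assume "\<not> 0 < measure \<mu>0 E"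
    then have "measure \<mu>0 E = 0" using measure_nonneg[of \<mu>0 E] by linarith
    then have "E \<in> null_sets \<mu>0"
      using E(1) finite_measure.emeasure_eq_measure[OF prob_space.axioms(1)[OF prob0]] by (simp add: null_sets_def)
    then have "measure \<mu>1 E = 0" using ac unfolding absolutely_continuous_def by (auto simp: measure_def null_sets_def)
    with \<open>measure \<mu>0 E = 0\<close> have "measure (J {0}) ?G = 0"
      unfolding measure_state_split[OF GJ] slice1 slice0 by simp
    then show False using unbounded \<epsilon>(1) by auto
  qed
  then show ?thesis using that E(1) ratio by blast
qed

lemma learning_probability_tendsto_1:
  assumes "absolutely_continuous \<mu>0 \<mu>1"
    and "\<forall>\<epsilon>>0. 0 < measure (J {0}) {\<omega> \<in> space (J {0}). priv_belief \<mu>0 \<mu>1 \<omega> < \<epsilon>}"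
  shows "(\<lambda>n. 1 - failure_bound likelihood_pairs n) \<longlonglongrightarrow> 1"
proof -
  have "\<exists>(a, b)\<in>likelihood_pairs. a \<le> \<delta> * b \<and> 0 < b" if "0 < \<delta>" for \<delta>
    using small_likelihood_ratio_event[OF assms(1) that assms(2)] unfolding likelihood_pairs_def by blast
  then have "(\<lambda>n. 1 - failure_bound likelihood_pairs n) \<longlonglongrightarrow> 1 - 0"
    by (intro tendsto_diff tendsto_const likelihood.failure_bound_tendsto_zero) blast
  then show ?thesis by simp
qed

end

theorem theorem3:
  fixes \<mu>0 \<mu>1 :: "'a measure"
  assumes "prob_space \<mu>0" and "prob_space \<mu>1"
    and "sets \<mu>1 = sets \<mu>0"
    and "\<mu>0 \<noteq> \<mu>1"
    and "absolutely_continuous \<mu>0 \<mu>1"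
    and unbounded_below:
      "\<forall>\<epsilon>>0. measure (joint \<mu>0 \<mu>1 {0})
                 {\<omega> \<in> space (joint \<mu>0 \<mu>1 {0}). priv_belief \<mu>0 \<mu>1 \<omega> < \<epsilon>} > 0"
  shows "\<exists>q :: nat \<Rightarrow> real. q \<longlonglongrightarrow> 1 \<and>
    (\<forall>(n :: nat) (V :: nat set) (F :: nat \<Rightarrow> (bool \<times> (nat \<Rightarrow> 'a)) measure)
        (L :: bool \<times> (nat \<Rightarrow> 'a) \<Rightarrow> nat set).
      finite V \<and> card V = n \<and>
      (\<forall>u\<in>V. info_algebra \<mu>0 \<mu>1 V u (F u)) \<and>
      (\<forall>u\<in>V. \<forall>w\<in>V. \<exists>g \<in> measurable (F w) (count_space UNIV).
         AE \<omega> in joint \<mu>0 \<mu>1 V.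
           opt_actions (post_belief \<mu>0 \<mu>1 V (F u) \<omega>) = g \<omega>) \<and>
      L \<in> measurable (joint \<mu>0 \<mu>1 V) (count_space UNIV) \<and>
      (\<forall>u\<in>V. AE \<omega> in joint \<mu>0 \<mu>1 V. L \<omega> = opt_actions (post_belief \<mu>0 \<mu>1 V (F u) \<omega>))
      \<longrightarrow>
      measure (joint \<mu>0 \<mu>1 V) {\<omega> \<in> space (joint \<mu>0 \<mu>1 V). L \<omega> = {0} \<and> \<not> state \<omega>}
        / measure (joint \<mu>0 \<mu>1 V) {\<omega> \<in> space (joint \<mu>0 \<mu>1 V). \<not> state \<omega>}
      \<ge> q n)"
proof -
  interpret binary_signal_model \<mu>0 \<mu>1 using assms(1-3) by (simp add: binary_signal_model_def)
  show ?thesis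
    by (intro exI[of _ "\<lambda>n. 1 - failure_bound likelihood_pairs n"] conjI allI impI)
      (use learning_probability_tendsto_1[OF assms(5) unbounded_below] in simp,
       elim conjE, hypsubst, rule correct_action_failure_bound)
qed

end
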